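(* For any model $M$ (on $n$ variables), $M_{\wedge,\to}$ is contained in $U(n)_{\wedge,\to}$. In particular, $M_{\wedge,\to}$ is a generated submodel of $U(n)$ in which every chain has at most $n$ elements, and $M_{\wedge,\to}$ (as well as $U(n)_{\wedge,\to}$) is finite.
   Context: Fix $n\ge1$ and variables $p_1,\dots,p_n$; $2^n=\{0,1\}^n$ with componentwise order. A model is $(M,\le,c)$, $(M,\le)$ a poset, $c:M\to 2^n$ order-preserving, with intuitionistic Kripke semantics ($x\models p_i$ iff $c(x)_i=1$). A p-morphism of models is an order- and colour-preserving map $f$ such that $f(x)\le y$ implies $f(x')=y$ for some $x'\ge x$. A generated submodel is an up-set with the restricted structure. A point $x$ is separated if for some variable $q$, $x\not\models q$ but all $y>x$ satisfy $q$. $M^s$ is the set of separated points of $M$ with restricted order and colouring; all chains in $M^s$ have at most $n$ elements. $U(n)$ is the $n$-universal model: the generated submodel of the canonical model of IPC on $p_1,\dots,p_n$ (prime filters of the free Heyting algebra on $p_1,\dots,p_n$ ordered by inclusion, $c(x)_i=1$ iff $p_i\in x$) consisting of points with finite up-set. For every model $N$ of finite depth there is a unique p-morphism $N\to U(n)$. For a model $M$, with $f:M^s\to U(n)$ the unique p-morphism, $M_{\wedge,\to}:=f(M^s)$, a generated submodel of $U(n)$; $U(n)_{\wedge,\to}$ is the case $M=U(n)$. *)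

theory Defs
  imports Main
begin

text \<open>A model on n variables (variables indexed 0..n-1): a carrier A with a partial order le
  on A and a colouring c, where c x is the set of indices of variables true at x
  (so c x \<subseteq> {..<n}, i.e. an element of 2^n), order-preserving.\<close>

definition is_model :: "nat \<Rightarrow> 'a set \<Rightarrow> ('a \<Rightarrow> 'a \<Rightarrow> bool) \<Rightarrow> ('a \<Rightarrow> nat set) \<Rightarrow> bool" where
  "is_model n A le c \<longleftrightarrow>
     (\<forall>x\<in>A. le x x) \<and>
     (\<forall>x\<in>A. \<forall>y\<in>A. \<forall>z\<in>A. le x y \<longrightarrow> le y z \<longrightarrow> le x z) \<and>
     (\<forall>x\<in>A. \<forall>y\<in>A. le x y \<longrightarrow> le y x \<longrightarrow> x = y) \<and>
     (\<forall>x\<in>A. c x \<subseteq> {..<n}) \<and>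
     (\<forall>x\<in>A. \<forall>y\<in>A. le x y \<longrightarrow> c x \<subseteq> c y)"

definition p_morphism ::
  "'a set \<Rightarrow> ('a \<Rightarrow> 'a \<Rightarrow> bool) \<Rightarrow> ('a \<Rightarrow> nat set) \<Rightarrow>
   'b set \<Rightarrow> ('b \<Rightarrow> 'b \<Rightarrow> bool) \<Rightarrow> ('b \<Rightarrow> nat set) \<Rightarrow> ('a \<Rightarrow> 'b) \<Rightarrow> bool" where
  "p_morphism A le c B le' c' f \<longleftrightarrow>
     (\<forall>x\<in>A. f x \<in> B) \<and>
     (\<forall>x\<in>A. \<forall>y\<in>A. le x y \<longrightarrow> le' (f x) (f y)) \<and>
     (\<forall>x\<in>A. c' (f x) = c x) \<and>
     (\<forall>x\<in>A. \<forall>y\<in>B. le' (f x) y \<longrightarrow> (\<exists>x'\<in>A. le x x' \<and> f x' = y))"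

definition generated_sub :: "'a set \<Rightarrow> ('a \<Rightarrow> 'a \<Rightarrow> bool) \<Rightarrow> 'a set \<Rightarrow> bool" where
  "generated_sub A le S \<longleftrightarrow> S \<subseteq> A \<and> (\<forall>x\<in>S. \<forall>y\<in>A. le x y \<longrightarrow> y \<in> S)"

definition sep_points :: "nat \<Rightarrow> 'a set \<Rightarrow> ('a \<Rightarrow> 'a \<Rightarrow> bool) \<Rightarrow> ('a \<Rightarrow> nat set) \<Rightarrow> 'a set" where
  "sep_points n A le c =
     {x\<in>A. \<exists>q<n. q \<notin> c x \<and> (\<forall>y\<in>A. le x y \<and> y \<noteq> x \<longrightarrow> q \<in> c y)}"

definition is_chain_in :: "('a \<Rightarrow> 'a \<Rightarrow> bool) \<Rightarrow> 'a set \<Rightarrow> 'a set \<Rightarrow> bool" where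
  "is_chain_in le S C \<longleftrightarrow> C \<subseteq> S \<and> (\<forall>x\<in>C. \<forall>y\<in>C. le x y \<or> le y x)"

datatype form = Var nat | Bot | Conj form form | Disj form form | Impl form form

fun vars :: "form \<Rightarrow> nat set" where
  "vars (Var i) = {i}"
| "vars Bot = {}"
| "vars (Conj a b) = vars a \<union> vars b"
| "vars (Disj a b) = vars a \<union> vars b"
| "vars (Impl a b) = vars a \<union> vars b"

definition lang :: "nat \<Rightarrow> form set" where
  "lang n = {\<phi>. vars \<phi> \<subseteq> {..<n}}"

inductive ipc :: "form \<Rightarrow> bool" where
  ax_K: "ipc (Impl a (Impl b a))"
| ax_S: "ipc (Impl (Impl a (Impl b c)) (Impl (Impl a b) (Impl a c)))"
| ax_C1: "ipc (Impl (Conj a b) a)"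
| ax_C2: "ipc (Impl (Conj a b) b)"
| ax_C3: "ipc (Impl a (Impl b (Conj a b)))"
| ax_D1: "ipc (Impl a (Disj a b))"
| ax_D2: "ipc (Impl b (Disj a b))"
| ax_D3: "ipc (Impl (Impl a c) (Impl (Impl b c) (Impl (Disj a b) c)))"
| ax_EFQ: "ipc (Impl Bot a)"
| mp: "ipc (Impl a b) \<Longrightarrow> ipc a \<Longrightarrow> ipc b"

text \<open>Prime theories in L_n: these are exactly the preimages of prime filters of the free
  Heyting algebra (Lindenbaum algebra of IPC on n variables) under the quotient map.\<close>
definition prime_theory :: "nat \<Rightarrow> form set \<Rightarrow> bool" where
  "prime_theory n T \<longleftrightarrow>
     T \<subseteq> lang n \<and>
     (\<forall>\<phi>\<in>lang n. ipc \<phi> \<longrightarrow> \<phi> \<in> T) \<and>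
     (\<forall>\<phi> \<psi>. \<phi> \<in> T \<longrightarrow> Impl \<phi> \<psi> \<in> T \<longrightarrow> \<psi> \<in> T) \<and>
     Bot \<notin> T \<and>
     (\<forall>\<phi> \<psi>. Disj \<phi> \<psi> \<in> T \<longrightarrow> \<phi> \<in> T \<or> \<psi> \<in> T)"

definition Ucol :: "nat \<Rightarrow> form set \<Rightarrow> nat set" where
  "Ucol n T = {i. i < n \<and> Var i \<in> T}"

text \<open>U(n): points of the canonical model with finite up-set; ordered by inclusion.\<close>
definition Univ :: "nat \<Rightarrow> form set set" where
  "Univ n = {T. prime_theory n T \<and> finite {S. prime_theory n S \<and> T \<subseteq> S}}"

end

theory Submission
  imports Defs
begin

section \<open>Kripke semantics\<close>

fun sat :: "'a set \<Rightarrow> ('a \<Rightarrow> 'a \<Rightarrow> bool) \<Rightarrow> ('a \<Rightarrow> nat set) \<Rightarrow> 'a \<Rightarrow> form \<Rightarrow> bool" where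
  "sat A le c x (Var i) = (i \<in> c x)"
| "sat A le c x Bot = False"
| "sat A le c x (Conj a b) = (sat A le c x a \<and> sat A le c x b)"
| "sat A le c x (Disj a b) = (sat A le c x a \<or> sat A le c x b)"
| "sat A le c x (Impl a b) = (\<forall>y\<in>A. le x y \<longrightarrow> sat A le c y a \<longrightarrow> sat A le c y b)"

lemma p_morphism_sat:
  assumes h: "p_morphism A le c B le' c' h" and "x \<in> A"
  shows "sat B le' c' (h x) \<phi> = sat A le c x \<phi>"
  using \<open>x \<in> A\<close>
proof (induction \<phi> arbitrary: x)
  case (Impl a b)
  show ?case
  proof
    assume H: "sat B le' c' (h x) (Impl a b)"
    show "sat A le c x (Impl a b)"
    proof (simp, intro ballI impI)
      fix y assume "y \<in> A" "le x y" "sat A le c y a"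
      then have "h y \<in> B" "le' (h x) (h y)" using h Impl.prems unfolding p_morphism_def by auto
      with H Impl.IH \<open>y \<in> A\<close> \<open>sat A le c y a\<close> show "sat A le c y b" by auto
    qed
  next
    assume H: "sat A le c x (Impl a b)"
    show "sat B le' c' (h x) (Impl a b)"
    proof (simp, intro ballI impI)
      fix y assume "y \<in> B" "le' (h x) y" "sat B le' c' y a"
      then obtain x' where "x' \<in> A" "le x x'" "h x' = y"
        using h Impl.prems unfolding p_morphism_def by blast
      with H Impl.IH \<open>sat B le' c' y a\<close> show "sat B le' c' y b" by auto
    qed
  qed
qed (use h in \<open>auto simp: p_morphism_def\<close>)

lemma generated_sub_sat:
  assumes "generated_sub A le S" and "x \<in> S"
  shows "sat S le c x \<phi> = sat A le c x \<phi>"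
  using \<open>x \<in> S\<close>
proof (induction \<phi> arbitrary: x)
  case (Impl a b)
  then show ?case using assms(1) unfolding generated_sub_def by (auto; blast)
qed auto

section \<open>Theories of IPC\<close>

definition ipc_theory :: "nat \<Rightarrow> form set \<Rightarrow> bool" where
  "ipc_theory n T \<longleftrightarrow> T \<subseteq> lang n \<and> (\<forall>\<phi>\<in>lang n. ipc \<phi> \<longrightarrow> \<phi> \<in> T) \<and>
     (\<forall>\<phi> \<psi>. \<phi> \<in> T \<longrightarrow> Impl \<phi> \<psi> \<in> T \<longrightarrow> \<psi> \<in> T)"

lemma lang_simps [simp]:
  "Impl a b \<in> lang n \<longleftrightarrow> a \<in> lang n \<and> b \<in> lang n"
  "Conj a b \<in> lang n \<longleftrightarrow> a \<in> lang n \<and> b \<in> lang n"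
  "Disj a b \<in> lang n \<longleftrightarrow> a \<in> lang n \<and> b \<in> lang n"
  "Bot \<in> lang n"
  "Var i \<in> lang n \<longleftrightarrow> i < n"
  by (auto simp: lang_def)

lemma ipc_refl: "ipc (Impl a a)"
  using ipc.mp[OF ipc.mp[OF ipc.ax_S[of a "Impl a a" a] ipc.ax_K[of a "Impl a a"]] ipc.ax_K[of a a]] .

lemma prime_theory_ipc_theory: "prime_theory n T \<Longrightarrow> ipc_theory n T"
  unfolding prime_theory_def ipc_theory_def by blast

lemma ipc_theory_lang: "ipc_theory n T \<Longrightarrow> \<phi> \<in> T \<Longrightarrow> \<phi> \<in> lang n"
  unfolding ipc_theory_def by blast

lemma ipc_theory_thm: "ipc_theory n T \<Longrightarrow> \<phi> \<in> lang n \<Longrightarrow> ipc \<phi> \<Longrightarrow> \<phi> \<in> T"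
  unfolding ipc_theory_def by blast

lemma ipc_theory_mp: "ipc_theory n T \<Longrightarrow> \<phi> \<in> T \<Longrightarrow> Impl \<phi> \<psi> \<in> T \<Longrightarrow> \<psi> \<in> T"
  unfolding ipc_theory_def by blast

lemma ipc_theory_ipc_mp:
  assumes "ipc_theory n T" "ipc (Impl \<phi> \<psi>)" "\<phi> \<in> lang n" "\<psi> \<in> lang n" "\<phi> \<in> T"
  shows "\<psi> \<in> T"
  using assms ipc_theory_thm ipc_theory_mp by (metis lang_simps(1))

text \<open>The formulas implied by a relative to T form a theory containing T and a; this is
  the deduction theorem in the form needed to refute a formula Impl a b.\<close>
definition relative_theory :: "nat \<Rightarrow> form set \<Rightarrow> form \<Rightarrow> form set" where
  "relative_theory n T a = {\<phi>\<in>lang n. Impl a \<phi> \<in> T}"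

lemma relative_theory:
  assumes T: "ipc_theory n T" and a: "a \<in> lang n"
  shows "ipc_theory n (relative_theory n T a)" "T \<subseteq> relative_theory n T a"
    "a \<in> relative_theory n T a"
proof -
  have weaken: "Impl a \<psi> \<in> T" if "\<psi> \<in> T" for \<psi>
    using ipc_theory_ipc_mp[OF T ipc.ax_K[of \<psi> a]] a that ipc_theory_lang[OF T] by auto
  show "T \<subseteq> relative_theory n T a"
    using weaken ipc_theory_lang[OF T] unfolding relative_theory_def by blast
  show "a \<in> relative_theory n T a"
    using ipc_theory_thm[OF T _ ipc_refl[of a]] a unfolding relative_theory_def by simp
  show "ipc_theory n (relative_theory n T a)"
    unfolding ipc_theory_def relative_theory_def
  proof (intro conjI ballI allI impI)
    fix \<phi> \<psi> assume H: "\<phi> \<in> {\<phi> \<in> lang n. Impl a \<phi> \<in> T}" "Impl \<phi> \<psi> \<in> {\<phi> \<in> lang n. Impl a \<phi> \<in> T}"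
    then have L: "\<phi> \<in> lang n" "\<psi> \<in> lang n" by auto
    have "Impl (Impl a (Impl \<phi> \<psi>)) (Impl (Impl a \<phi>) (Impl a \<psi>)) \<in> T"
      using ipc_theory_thm[OF T _ ipc.ax_S[of a \<phi> \<psi>]] a L by simp
    then have "Impl a \<psi> \<in> T" using ipc_theory_mp[OF T] H by blast
    then show "\<psi> \<in> {\<phi> \<in> lang n. Impl a \<phi> \<in> T}" using L by auto
  qed (use weaken ipc_theory_thm[OF T] in auto)
qed

lemma ipc_theory_Union_chain:
  assumes "C \<noteq> {}" "chain\<^sub>\<subseteq> C" "\<And>X. X \<in> C \<Longrightarrow> ipc_theory n X"
  shows "ipc_theory n (\<Union>C)"
  unfolding ipc_theory_def
proof (intro conjI ballI allI impI)
  fix \<phi> \<psi> assume "\<phi> \<in> \<Union>C" "Impl \<phi> \<psi> \<in> \<Union>C"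
  then obtain X Y where XY: "X \<in> C" "Y \<in> C" "\<phi> \<in> X" "Impl \<phi> \<psi> \<in> Y" by blast
  then have "X \<subseteq> Y \<or> Y \<subseteq> X" using assms(2) unfolding chain_subset_def by blast
  then show "\<psi> \<in> \<Union>C" using XY assms(3) ipc_theory_mp by blast
qed (use assms ipc_theory_lang ipc_theory_thm in blast)+

lemma maximal_theory_prime:
  assumes M: "ipc_theory n M" and b: "b \<in> lang n" "b \<notin> M"
    and maximal: "\<And>E. ipc_theory n E \<Longrightarrow> M \<subset> E \<Longrightarrow> b \<in> E"
  shows "prime_theory n M"
proof -
  have "Bot \<notin> M"
    using ipc_theory_ipc_mp[OF M ipc.ax_EFQ[of b]] b by auto
  moreover have "\<phi> \<in> M \<or> \<psi> \<in> M" if disj: "Disj \<phi> \<psi> \<in> M" for \<phi> \<psi>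
  proof (rule ccontr)
    assume neither: "\<not> (\<phi> \<in> M \<or> \<psi> \<in> M)"
    have L: "\<phi> \<in> lang n" "\<psi> \<in> lang n" using ipc_theory_lang[OF M disj] by auto
    have refuted: "Impl \<chi> b \<in> M" if "\<chi> \<in> lang n" "\<chi> \<notin> M" for \<chi>
      using relative_theory[OF M that(1)] maximal that(2)
      unfolding relative_theory_def by blast
    have "Impl (Impl \<phi> b) (Impl (Impl \<psi> b) (Impl (Disj \<phi> \<psi>) b)) \<in> M"
      using ipc_theory_thm[OF M _ ipc.ax_D3[of \<phi> b \<psi>]] L b by simp
    then have "b \<in> M"
      using refuted L neither disj ipc_theory_mp[OF M] by meson
    then show False using b by simp
  qed
  ultimately show ?thesis using M unfolding prime_theory_def ipc_theory_def by blast
qed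

lemma prime_extension:
  assumes D: "ipc_theory n D" and b: "b \<in> lang n" "b \<notin> D"
  shows "\<exists>S. prime_theory n S \<and> D \<subseteq> S \<and> b \<notin> S"
proof -
  let ?F = "{S. ipc_theory n S \<and> D \<subseteq> S \<and> b \<notin> S}"
  have "\<exists>U\<in>?F. \<forall>X\<in>C. X \<subseteq> U" if C: "C \<in> chains ?F" for C
  proof (cases "C = {}")
    case True
    then show ?thesis using D b by blast
  next
    case False
    have "ipc_theory n (\<Union>C)"
      using ipc_theory_Union_chain[OF False] C unfolding chains_def by blast
    then have "\<Union>C \<in> ?F" using C False unfolding chains_def by blast
    then show ?thesis by blast
  qed
  then obtain M where M: "M \<in> ?F" and max: "\<forall>X\<in>?F. M \<subseteq> X \<longrightarrow> X = M"
    using Zorn_Lemma2[of ?F] by blast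
  have "prime_theory n M"
    by (rule maximal_theory_prime[of n M b]) (use M max b in blast)+
  then show ?thesis using M by blast
qed

section \<open>The truth lemma for U(n)\<close>

lemma Univ_prime: "T \<in> Univ n \<Longrightarrow> prime_theory n T"
  by (simp add: Univ_def)

lemma Univ_ipc_theory: "T \<in> Univ n \<Longrightarrow> ipc_theory n T"
  by (simp add: Univ_prime prime_theory_ipc_theory)

text \<open>For Impl a b outside T, the
  refuting point is a prime extension of the relative theory of a; it lies in U(n) since
  its up-set is contained in that of T.\<close>
lemma truth_lemma:
  assumes "T \<in> Univ n" "\<phi> \<in> lang n"
  shows "sat (Univ n) (\<subseteq>) (Ucol n) T \<phi> \<longleftrightarrow> \<phi> \<in> T"
  using assms
proof (induction \<phi> arbitrary: T)
  case (Var i)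
  then show ?case by (auto simp: Ucol_def)
next
  case Bot
  then show ?case by (auto simp: Univ_def prime_theory_def)
next
  case (Conj a b)
  have th: "ipc_theory n T" using Conj.prems Univ_ipc_theory by blast
  have "Conj a b \<in> T \<longleftrightarrow> a \<in> T \<and> b \<in> T"
  proof
    assume "Conj a b \<in> T" then show "a \<in> T \<and> b \<in> T"
      using ipc_theory_ipc_mp[OF th ipc.ax_C1[of a b]] ipc_theory_ipc_mp[OF th ipc.ax_C2[of a b]]
        Conj.prems by auto
  next
    assume "a \<in> T \<and> b \<in> T"
    moreover have "Impl a (Impl b (Conj a b)) \<in> T"
      using ipc_theory_thm[OF th _ ipc.ax_C3[of a b]] Conj.prems by simp
    ultimately show "Conj a b \<in> T" using ipc_theory_mp[OF th] by blast
  qed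
  then show ?case using Conj by auto
next
  case (Disj a b)
  have th: "ipc_theory n T" using Disj.prems Univ_ipc_theory by blast
  have "Disj a b \<in> T \<longleftrightarrow> a \<in> T \<or> b \<in> T"
  proof
    assume "Disj a b \<in> T" then show "a \<in> T \<or> b \<in> T"
      using Univ_prime[OF Disj.prems(1)] unfolding prime_theory_def by blast
  next
    assume "a \<in> T \<or> b \<in> T" then show "Disj a b \<in> T"
      using ipc_theory_ipc_mp[OF th ipc.ax_D1[of a b]] ipc_theory_ipc_mp[OF th ipc.ax_D2[of b a]]
        Disj.prems by auto
  qed
  then show ?case using Disj by auto
next
  case (Impl a b)
  have th: "ipc_theory n T" using Impl.prems Univ_ipc_theory by blast
  have L: "a \<in> lang n" "b \<in> lang n" using Impl.prems by auto
  show ?case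
  proof
    assume forced: "sat (Univ n) (\<subseteq>) (Ucol n) T (Impl a b)"
    show "Impl a b \<in> T"
    proof (rule ccontr)
      assume "Impl a b \<notin> T"
      then have "b \<notin> relative_theory n T a" unfolding relative_theory_def by simp
      then obtain S where S: "prime_theory n S" "relative_theory n T a \<subseteq> S" "b \<notin> S"
        using prime_extension[OF relative_theory(1)[OF th L(1)] L(2)] by blast
      have TS: "T \<subseteq> S" "a \<in> S" using S relative_theory[OF th L(1)] by auto
      then have "{S'. prime_theory n S' \<and> S \<subseteq> S'} \<subseteq> {S'. prime_theory n S' \<and> T \<subseteq> S'}" by auto
      then have "S \<in> Univ n" using S Impl.prems(1) by (auto simp: Univ_def intro: finite_subset)
      then show False using forced TS Impl.IH L S by auto
    qed
  next
    assume I: "Impl a b \<in> T"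
    show "sat (Univ n) (\<subseteq>) (Ucol n) T (Impl a b)"
    proof (simp, intro ballI impI)
      fix y assume y: "y \<in> Univ n" "T \<subseteq> y" "sat (Univ n) (\<subseteq>) (Ucol n) y a"
      then have "a \<in> y" "Impl a b \<in> y" using Impl.IH L I by auto
      then have "b \<in> y" using ipc_theory_mp[OF Univ_ipc_theory[OF y(1)]] by blast
      then show "sat (Univ n) (\<subseteq>) (Ucol n) y b" using Impl.IH L y by auto
    qed
  qed
qed

lemma Univ_eqI:
  assumes "T \<in> Univ n" "S \<in> Univ n"
    and "\<And>\<phi>. sat (Univ n) (\<subseteq>) (Ucol n) T \<phi> = sat (Univ n) (\<subseteq>) (Ucol n) S \<phi>"
  shows "T = S"
  using assms truth_lemma ipc_theory_lang[OF Univ_ipc_theory] by blast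

definition strict_up :: "'a set \<Rightarrow> ('a \<Rightarrow> 'a \<Rightarrow> bool) \<Rightarrow> 'a \<Rightarrow> 'a set" where
  "strict_up A le x = {y\<in>A. le x y \<and> y \<noteq> x}"

lemma Univ_determined:
  assumes "T \<in> Univ n" "S \<in> Univ n" "Ucol n T = Ucol n S"
    and "strict_up (Univ n) (\<subseteq>) T = strict_up (Univ n) (\<subseteq>) S"
  shows "T = S"
proof (rule Univ_eqI[OF assms(1,2)])
  fix \<phi>
  show "sat (Univ n) (\<subseteq>) (Ucol n) T \<phi> = sat (Univ n) (\<subseteq>) (Ucol n) S \<phi>"
  proof (induction \<phi>)
    case (Impl a b)
    have split: "(\<forall>y\<in>Univ n. Z \<subseteq> y \<longrightarrow> P y) \<longleftrightarrow> P Z \<and> (\<forall>y\<in>strict_up (Univ n) (\<subseteq>) Z. P y)"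
      if "Z \<in> Univ n" for Z P using that by (auto simp: strict_up_def)
    show ?case using split[OF assms(1)] split[OF assms(2)] assms(4) Impl by simp
  qed (use assms(3) in auto)
qed

lemma Univ_is_model: "is_model n (Univ n) (\<subseteq>) (Ucol n)"
  by (auto simp: is_model_def Ucol_def)

text \<open>Every p-morphism into U(n) from a submodel D of U(n) fixes the points of each
  generated submodel W contained in D: such a point forces the same formulas in D, in W
  and in U(n).\<close>
lemma p_morphism_fixes_generated_points:
  assumes g: "p_morphism D (\<subseteq>) (Ucol n) (Univ n) (\<subseteq>) (Ucol n) g"
    and D: "D \<subseteq> Univ n" and W: "generated_sub (Univ n) (\<subseteq>) W" "W \<subseteq> D" and T: "T \<in> W"
  shows "g T = T"
proof -
  have "T \<in> D" using T W(2) by blast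
  have "generated_sub D (\<subseteq>) W" using W D unfolding generated_sub_def by (meson subsetD)
  have gT: "g T \<in> Univ n" using g \<open>T \<in> D\<close> by (simp add: p_morphism_def)
  show ?thesis
  proof (rule Univ_eqI[OF gT])
    show "T \<in> Univ n" using \<open>T \<in> D\<close> D by blast
    fix \<phi>
    have "sat (Univ n) (\<subseteq>) (Ucol n) (g T) \<phi> = sat D (\<subseteq>) (Ucol n) T \<phi>"
      using p_morphism_sat[OF g \<open>T \<in> D\<close>] .
    also have "\<dots> = sat W (\<subseteq>) (Ucol n) T \<phi>"
      using generated_sub_sat[OF \<open>generated_sub D (\<subseteq>) W\<close> T] by simp
    also have "\<dots> = sat (Univ n) (\<subseteq>) (Ucol n) T \<phi>"
      using generated_sub_sat[OF W(1) T] .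
    finally show "sat (Univ n) (\<subseteq>) (Ucol n) (g T) \<phi> = sat (Univ n) (\<subseteq>) (Ucol n) T \<phi>" .
  qed
qed

section \<open>Separated points\<close>

lemma is_modelD:
  assumes "is_model n A le c"
  shows "x \<in> A \<Longrightarrow> le x x"
    and "x \<in> A \<Longrightarrow> y \<in> A \<Longrightarrow> z \<in> A \<Longrightarrow> le x y \<Longrightarrow> le y z \<Longrightarrow> le x z"
    and "x \<in> A \<Longrightarrow> y \<in> A \<Longrightarrow> le x y \<Longrightarrow> le y x \<Longrightarrow> x = y"
    and "x \<in> A \<Longrightarrow> c x \<subseteq> {..<n}"
  using assms unfolding is_model_def by blast+

text \<open>The image of the separated points under a p-morphism consists of separated points
  and is up-closed: a strict successor of h x is the image of a strict successor of x.\<close>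
lemma p_morphic_image_separated:
  assumes h: "p_morphism (sep_points n A le c) le c B le' c' h"
  shows "h ` sep_points n A le c \<subseteq> sep_points n B le' c'"
    and "generated_sub B le' (h ` sep_points n A le c)"
proof -
  have into: "h ` sep_points n A le c \<subseteq> B" using h by (auto simp: p_morphism_def)
  have "y \<in> h ` sep_points n A le c"
    if xy: "x \<in> sep_points n A le c" "y \<in> B" "le' (h x) y" for x y
  proof -
    obtain x' where "x' \<in> sep_points n A le c" "h x' = y"
      using h xy unfolding p_morphism_def by blast
    then show ?thesis by blast
  qed
  then show "generated_sub B le' (h ` sep_points n A le c)"
    using into unfolding generated_sub_def by blast
  show "h ` sep_points n A le c \<subseteq> sep_points n B le' c'"
  proof
    fix T assume "T \<in> h ` sep_points n A le c"
    then obtain x where x: "x \<in> sep_points n A le c" "T = h x" by auto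
    then obtain q where q: "q < n" "q \<notin> c x" "\<forall>y\<in>A. le x y \<and> y \<noteq> x \<longrightarrow> q \<in> c y"
      by (auto simp: sep_points_def)
    have "T \<in> B" "c' T = c x" using h x by (simp_all add: p_morphism_def)
    moreover have "q \<in> c' S" if S: "S \<in> B" "le' T S" "S \<noteq> T" for S
    proof -
      obtain x' where x': "x' \<in> sep_points n A le c" "le x x'" "h x' = S"
        using h x S unfolding p_morphism_def by blast
      have "x' \<noteq> x" using x x' S(3) by blast
      moreover have "x' \<in> A" using x' by (simp add: sep_points_def)
      ultimately have "q \<in> c x'" using q(3) x'(2) by blast
      moreover have "c' S = c x'" using h x'(1) x'(3) unfolding p_morphism_def by blast
      ultimately show ?thesis by simp
    qed
    ultimately show "T \<in> sep_points n B le' c'"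
      using q by (auto simp: sep_points_def)
  qed
qed

text \<open>A chain of separated points has at most n elements: choosing a separating variable
  for each point gives an injection into the n variables, since the separating variable
  of the smaller of two comparable points holds at the larger one.\<close>
lemma separated_chain_card:
  assumes "is_chain_in le (sep_points n A le c) C"
  shows "finite C \<and> card C \<le> n"
proof -
  define separates where
    "separates x q \<longleftrightarrow> q < n \<and> q \<notin> c x \<and> (\<forall>y\<in>A. le x y \<and> y \<noteq> x \<longrightarrow> q \<in> c y)" for x q
  define w where "w x = (SOME q. separates x q)" for x
  have C: "C \<subseteq> sep_points n A le c" "\<forall>x\<in>C. \<forall>y\<in>C. le x y \<or> le y x"
    using assms unfolding is_chain_in_def by auto
  have w: "separates x (w x)" if "x \<in> C" for x
  proof -
    have "\<exists>q. separates x q" using that C(1) unfolding sep_points_def separates_def by blast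
    then show ?thesis unfolding w_def by (rule someI_ex)
  qed
  have below: "w x \<in> c y" if "x \<in> C" "y \<in> C" "le x y" "x \<noteq> y" for x y
    using w[OF that(1)] that C(1) unfolding separates_def sep_points_def by auto
  have inj: "inj_on w C"
  proof (rule inj_onI, rule ccontr)
    fix x y assume xy: "x \<in> C" "y \<in> C" "w x = w y" "x \<noteq> y"
    have "w x \<notin> c x" "w y \<notin> c y" using w xy(1,2) unfolding separates_def by auto
    moreover have "le x y \<or> le y x" using C(2) xy(1,2) by blast
    ultimately show False using below xy by metis
  qed
  have into: "w ` C \<subseteq> {..<n}" using w unfolding separates_def by auto
  show ?thesis
    using inj_on_finite[OF inj into] card_inj_on_le[OF inj into] by simp
qed

definition level :: "('a \<Rightarrow> 'a \<Rightarrow> bool) \<Rightarrow> 'a set \<Rightarrow> nat \<Rightarrow> 'a set" where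
  "level le W k = {x\<in>W. \<forall>C. is_chain_in le {y\<in>W. le x y} C \<longrightarrow> card C \<le> k}"

text \<open>A strict successor of a point of level k+1 has level k: a chain above it extends by
  the point itself.\<close>
lemma strict_successor_level:
  assumes model: "is_model n A le c" and "W \<subseteq> A"
    and chains_finite: "\<And>C. is_chain_in le W C \<Longrightarrow> finite C"
    and x: "x \<in> level le W (Suc k)" and y: "y \<in> W" "le x y" "y \<noteq> x"
  shows "y \<in> level le W k"
proof -
  have "x \<in> W" using x by (simp add: level_def)
  have "card C \<le> k" if C: "is_chain_in le {z\<in>W. le y z} C" for C
  proof -
    have CW: "C \<subseteq> W" and CY: "\<forall>z\<in>C. le y z" and comp: "\<forall>u\<in>C. \<forall>v\<in>C. le u v \<or> le v u"
      using C unfolding is_chain_in_def by auto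
    have "le x z" if "z \<in> C" for z
      using is_modelD(2)[OF model, of x y z] \<open>x \<in> W\<close> y CW CY that \<open>W \<subseteq> A\<close> by blast
    moreover have "x \<notin> C"
      using is_modelD(3)[OF model, of x y] \<open>x \<in> W\<close> y CY \<open>W \<subseteq> A\<close> by blast
    moreover have "le x x" using is_modelD(1)[OF model] \<open>x \<in> W\<close> \<open>W \<subseteq> A\<close> by blast
    ultimately have "is_chain_in le {z\<in>W. le x z} (insert x C)"
      using CW comp \<open>x \<in> W\<close> unfolding is_chain_in_def by auto
    then have "card (insert x C) \<le> Suc k" using x unfolding level_def by blast
    moreover have "finite C" using chains_finite CW comp unfolding is_chain_in_def by blast
    ultimately show ?thesis using \<open>x \<notin> C\<close> by simp
  qed
  then show ?thesis using y unfolding level_def by blast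
qed

text \<open>If W is up-closed and its points are determined by colour and strict up-set, each
  level is finite: by induction, a point of level k+1 is determined by a subset of the
  n variables and a subset of the finite level k.\<close>
lemma finite_level:
  assumes model: "is_model n A le c" and W: "generated_sub A le W"
    and chains_finite: "\<And>C. is_chain_in le W C \<Longrightarrow> finite C"
    and determined: "\<And>x y. x \<in> W \<Longrightarrow> y \<in> W \<Longrightarrow> c x = c y \<Longrightarrow>
                      strict_up A le x = strict_up A le y \<Longrightarrow> x = y"
  shows "finite (level le W k)"
proof (induction k)
  case 0
  have "\<not> is_chain_in le {y\<in>W. le x y} {x} \<or> x \<notin> level le W 0" for x
    unfolding level_def by auto
  moreover have "is_chain_in le {y\<in>W. le x y} {x}" if "x \<in> W" for x
    using that W is_modelD(1)[OF model] unfolding is_chain_in_def generated_sub_def by blast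
  ultimately have "level le W 0 = {}" unfolding level_def by blast
  then show ?case by simp
next
  case (Suc k)
  have WA: "W \<subseteq> A" using W by (simp add: generated_sub_def)
  define signature where "signature x = (c x, strict_up A le x)" for x
  have "inj_on signature (level le W (Suc k))"
    using determined unfolding inj_on_def signature_def level_def by blast
  moreover have "signature x \<in> Pow {..<n} \<times> Pow (level le W k)"
    if x: "x \<in> level le W (Suc k)" for x
  proof -
    have "x \<in> W" using x by (simp add: level_def)
    have "y \<in> level le W k" if "y \<in> strict_up A le x" for y
    proof -
      have "y \<in> W" "le x y" "y \<noteq> x"
        using that \<open>x \<in> W\<close> W unfolding strict_up_def generated_sub_def by auto
      then show ?thesis using strict_successor_level[OF model WA chains_finite x] by blast
    qed
    moreover have "c x \<subseteq> {..<n}" using is_modelD(4)[OF model] \<open>x \<in> W\<close> WA by blast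
    ultimately show ?thesis unfolding signature_def by auto
  qed
  ultimately show ?case using Suc inj_on_finite[of signature] by (meson finite_Pow_iff
        finite_SigmaI finite_lessThan image_subsetI)
qed

lemma is_chain_in_mono: "is_chain_in le S C \<Longrightarrow> S \<subseteq> S' \<Longrightarrow> is_chain_in le S' C"
  unfolding is_chain_in_def by blast

text \<open>An up-closed set of separated points whose points are determined by colour and strict
  up-set is finite, since all its points have level at most n.\<close>
lemma finite_separated_upset:
  assumes model: "is_model n A le c" and W: "generated_sub A le W" "W \<subseteq> sep_points n A le c"
    and determined: "\<And>x y. x \<in> W \<Longrightarrow> y \<in> W \<Longrightarrow> c x = c y \<Longrightarrow>
                      strict_up A le x = strict_up A le y \<Longrightarrow> x = y"
  shows "finite W"
proof -
  have chain_bound: "finite C \<and> card C \<le> n" if "is_chain_in le W C" for C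
    using separated_chain_card is_chain_in_mono[OF that W(2)] by blast
  have "W \<subseteq> level le W n"
  proof
    fix x assume "x \<in> W"
    have "card C \<le> n" if "is_chain_in le {y\<in>W. le x y} C" for C
      using chain_bound is_chain_in_mono[OF that] by blast
    then show "x \<in> level le W n" using \<open>x \<in> W\<close> unfolding level_def by blast
  qed
  moreover have "finite (level le W n)"
    using finite_level[OF model W(1)] chain_bound determined by blast
  ultimately show ?thesis by (rule finite_subset)
qed

corollary finite_separated_upset_Univ:
  assumes "generated_sub (Univ n) (\<subseteq>) W" "W \<subseteq> sep_points n (Univ n) (\<subseteq>) (Ucol n)"
  shows "finite W"
proof (rule finite_separated_upset[OF Univ_is_model assms])
  fix T S assume "T \<in> W" "S \<in> W" "Ucol n T = Ucol n S"
    "strict_up (Univ n) (\<subseteq>) T = strict_up (Univ n) (\<subseteq>) S"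
  moreover have "W \<subseteq> Univ n" using assms(1) by (simp add: generated_sub_def)
  ultimately show "T = S" using Univ_determined by blast
qed

theorem lemma3p8:
  fixes n :: nat and A :: "'a set" and le :: "'a \<Rightarrow> 'a \<Rightarrow> bool" and c :: "'a \<Rightarrow> nat set"
    and f :: "'a \<Rightarrow> form set" and g :: "form set \<Rightarrow> form set"
  assumes "n \<ge> 1"
    and "is_model n A le c"
    and "p_morphism (sep_points n A le c) le c (Univ n) (\<subseteq>) (Ucol n) f"
    and "p_morphism (sep_points n (Univ n) (\<subseteq>) (Ucol n)) (\<subseteq>) (Ucol n) (Univ n) (\<subseteq>) (Ucol n) g"
  shows "f ` sep_points n A le c \<subseteq> g ` sep_points n (Univ n) (\<subseteq>) (Ucol n)
     \<and> generated_sub (Univ n) (\<subseteq>) (f ` sep_points n A le c)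
     \<and> (\<forall>C. is_chain_in (\<subseteq>) (f ` sep_points n A le c) C \<longrightarrow> finite C \<and> card C \<le> n)
     \<and> finite (f ` sep_points n A le c)
     \<and> finite (g ` sep_points n (Univ n) (\<subseteq>) (Ucol n))"
proof -
  let ?Ms = "sep_points n A le c" and ?Us = "sep_points n (Univ n) (\<subseteq>) (Ucol n)"
  have Us_Univ: "?Us \<subseteq> Univ n" by (simp add: sep_points_def)
  have f_sep: "f ` ?Ms \<subseteq> ?Us" and f_gen: "generated_sub (Univ n) (\<subseteq>) (f ` ?Ms)"
    using p_morphic_image_separated[OF assms(3)] by auto
  have g_sep: "g ` ?Us \<subseteq> ?Us" and g_gen: "generated_sub (Univ n) (\<subseteq>) (g ` ?Us)"
    using p_morphic_image_separated[OF assms(4)] by auto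
  have "f ` ?Ms \<subseteq> g ` ?Us"
  proof
    fix T assume T: "T \<in> f ` ?Ms"
    then have "g T = T"
      using p_morphism_fixes_generated_points[OF assms(4) Us_Univ f_gen f_sep] by blast
    then show "T \<in> g ` ?Us" using T f_sep by (metis image_eqI subsetD)
  qed
  moreover have "\<forall>C. is_chain_in (\<subseteq>) (f ` ?Ms) C \<longrightarrow> finite C \<and> card C \<le> n"
    using separated_chain_card is_chain_in_mono f_sep by blast
  moreover have "finite (f ` ?Ms)" "finite (g ` ?Us)"
    using finite_separated_upset_Univ f_gen f_sep g_gen g_sep by blast+
  ultimately show ?thesis using f_gen by blast
qed

end
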